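(* Assume $\mathcal{W}^\ast=\sum_{k=1}^K\mathcal{W}^{\ast(k)}$ with $\|\boldsymbol{W}^{\ast(l)}_{(k)}\|_{S_\infty}\le\alpha$ for all $k\ne l$, and let $(\hat{\mathcal{W}}^{(k)})_k$ be a solution of $$\min_{\mathcal{W}^{(1)},\dots,\mathcal{W}^{(K)}}\ \tfrac12\Bigl\|\mathcal{Y}-\sum_{k}\mathcal{W}^{(k)}\Bigr\|_F^2+\lambda\sum_{k}\|\boldsymbol{W}^{(k)}_{(k)}\|_{S_1}\quad\text{s.t. } \|\boldsymbol{W}^{(k)}_{(l)}\|_{S_\infty}\le\alpha\ \ \forall\, l\ne k$$ (for some tensor $\mathcal{Y}$ and $\lambda>0$). Let $\Delta^{(k)}=\hat{\mathcal{W}}^{(k)}-\mathcal{W}^{\ast(k)}$ and $\Delta=\sum_{k=1}^K\Delta^{(k)}$. Then $$\frac12\sum_{k=1}^K\|\Delta^{(k)}\|_F^2\le\frac12\|\Delta\|_F^2+\alpha(K-1)\sum_{k=1}^K\|\boldsymbol{\Delta}^{(k)}_{(k)}\|_{S_1}.$$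
   Context: Tensors are elements of $\mathbb{R}^{n_1\times\cdots\times n_K}$ with $N=\prod_k n_k$; $\|\cdot\|_F$ is the Euclidean norm of the vectorization. For a tensor $\mathcal{W}^{(l)}$ (resp. $\Delta^{(k)}$), $\boldsymbol{W}^{(l)}_{(k)}$ (resp. $\boldsymbol{\Delta}^{(k)}_{(k)}$) in $\mathbb{R}^{n_k\times N/n_k}$ is its mode-$k$ unfolding (columns are mode-$k$ fibers). $\|\cdot\|_{S_1}$ is the trace norm and $\|\cdot\|_{S_\infty}$ the spectral norm; $\alpha\ge0$. *)

theory Defs
  imports "HOL-Analysis.Analysis"
begin

text \<open>Tensors of order K with dimensions n 0, ..., n (K-1) (modes indexed 0..K-1).
  A multi-index is an extensional function in PiE {..<K} (\<lambda>k. {..<n k});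
  a tensor is a real-valued function on multi-indices (only its values on the
  index set matter).\<close>

type_synonym tensor = "(nat \<Rightarrow> nat) \<Rightarrow> real"

definition idx_set :: "nat \<Rightarrow> (nat \<Rightarrow> nat) \<Rightarrow> (nat \<Rightarrow> nat) set" where
  "idx_set K n = PiE {..<K} (\<lambda>k. {..<n k})"

definition frob :: "nat \<Rightarrow> (nat \<Rightarrow> nat) \<Rightarrow> tensor \<Rightarrow> real" where
  "frob K n T = sqrt (\<Sum>x\<in>idx_set K n. (T x)\<^sup>2)"

text \<open>Mode-k unfolding: rows indexed by {..<n k}, columns by multi-indices of the
  remaining modes (column order is immaterial for the norms used).\<close>

definition unfold_cols :: "nat \<Rightarrow> (nat \<Rightarrow> nat) \<Rightarrow> nat \<Rightarrow> (nat \<Rightarrow> nat) set" where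
  "unfold_cols K n k = PiE ({..<K} - {k}) (\<lambda>j. {..<n j})"

definition unfold :: "nat \<Rightarrow> tensor \<Rightarrow> nat \<Rightarrow> (nat \<Rightarrow> nat) \<Rightarrow> real" where
  "unfold k T = (\<lambda>i c. T (c(k := i)))"

definition spec_norm :: "'r set \<Rightarrow> 'c set \<Rightarrow> ('r \<Rightarrow> 'c \<Rightarrow> real) \<Rightarrow> real" where
  "spec_norm R C A = Sup {sqrt (\<Sum>r\<in>R. (\<Sum>c\<in>C. A r c * v c)\<^sup>2) | v. (\<Sum>c\<in>C. (v c)\<^sup>2) \<le> 1}"

definition svd_decomp :: "'r set \<Rightarrow> 'c set \<Rightarrow> ('r \<Rightarrow> 'c \<Rightarrow> real) \<Rightarrow> nat \<Rightarrow> (nat \<Rightarrow> real)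
    \<Rightarrow> (nat \<Rightarrow> 'r \<Rightarrow> real) \<Rightarrow> (nat \<Rightarrow> 'c \<Rightarrow> real) \<Rightarrow> bool" where
  "svd_decomp R C A p \<sigma> u v \<longleftrightarrow>
     (\<forall>j<p. \<sigma> j \<ge> 0) \<and>
     (\<forall>j<p. \<forall>j'<p. (\<Sum>r\<in>R. u j r * u j' r) = (if j = j' then 1 else 0)) \<and>
     (\<forall>j<p. \<forall>j'<p. (\<Sum>c\<in>C. v j c * v j' c) = (if j = j' then 1 else 0)) \<and>
     (\<forall>r\<in>R. \<forall>c\<in>C. A r c = (\<Sum>j<p. \<sigma> j * u j r * v j c))"

definition trace_norm :: "'r set \<Rightarrow> 'c set \<Rightarrow> ('r \<Rightarrow> 'c \<Rightarrow> real) \<Rightarrow> real" where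
  "trace_norm R C A = (SOME s. \<exists>p \<sigma> u v. svd_decomp R C A p \<sigma> u v \<and> s = (\<Sum>j<p. \<sigma> j))"

definition spec_mode :: "nat \<Rightarrow> (nat \<Rightarrow> nat) \<Rightarrow> nat \<Rightarrow> tensor \<Rightarrow> real" where
  "spec_mode K n k T = spec_norm {..<n k} (unfold_cols K n k) (unfold k T)"

definition trace_mode :: "nat \<Rightarrow> (nat \<Rightarrow> nat) \<Rightarrow> nat \<Rightarrow> tensor \<Rightarrow> real" where
  "trace_mode K n k T = trace_norm {..<n k} (unfold_cols K n k) (unfold k T)"

definition feasible :: "nat \<Rightarrow> (nat \<Rightarrow> nat) \<Rightarrow> real \<Rightarrow> (nat \<Rightarrow> tensor) \<Rightarrow> bool" where
  "feasible K n \<alpha> W \<longleftrightarrow> (\<forall>k<K. \<forall>l<K. l \<noteq> k \<longrightarrow> spec_mode K n l (W k) \<le> \<alpha>)"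

definition objective :: "nat \<Rightarrow> (nat \<Rightarrow> nat) \<Rightarrow> tensor \<Rightarrow> real \<Rightarrow> (nat \<Rightarrow> tensor) \<Rightarrow> real" where
  "objective K n Y lam W =
     1/2 * (frob K n (\<lambda>x. Y x - (\<Sum>k<K. W k x)))\<^sup>2 + lam * (\<Sum>k<K. trace_mode K n k (W k))"

end

theory Submission
  imports Defs
begin

(* Expanding the square, ||Delta||^2 = sum_k ||Delta^(k)||^2 + sum_{k <> l} <Delta^(k), Delta^(l)>.
   Read in mode k, the cross term pairs the unfolding of Delta^(k) with the difference of the mode-k
   unfoldings of What^(l) and Wstar^(l), both of spectral norm at most alpha (feasibility of What and the
   hypothesis on Wstar).  By the duality |<A, B>| <= ||A||_S1 ||B||_Sinf each cross term is at least
   -2 alpha ||Delta^(k)_(k)||_S1, and for each k there are K - 1 of them.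

   The trace norm is defined by choosing some singular value decomposition, so the duality needs
   every finite matrix to have one.  It is built by deflation: a maximiser w of ||B w|| on the unit
   sphere exists by compactness and satisfies B^T B w = ||B w||^2 w, so (||B w||, B w / ||B w||, w)
   is a singular triple of the residual B, orthogonal to the triples already split off. *)

section \<open>Vectors and matrices over finite index sets\<close>

definition inner_on :: "'a set \<Rightarrow> ('a \<Rightarrow> real) \<Rightarrow> ('a \<Rightarrow> real) \<Rightarrow> real" where
  "inner_on S f g = (\<Sum>x\<in>S. f x * g x)"

definition sq_norm :: "'a set \<Rightarrow> ('a \<Rightarrow> real) \<Rightarrow> real" where
  "sq_norm S f = (\<Sum>x\<in>S. (f x)\<^sup>2)"

definition mat_vec :: "'c set \<Rightarrow> ('r \<Rightarrow> 'c \<Rightarrow> real) \<Rightarrow> ('c \<Rightarrow> real) \<Rightarrow> 'r \<Rightarrow> real" where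
  "mat_vec C B w = (\<lambda>r. inner_on C (B r) w)"

definition vec_mat :: "'r set \<Rightarrow> ('r \<Rightarrow> real) \<Rightarrow> ('r \<Rightarrow> 'c \<Rightarrow> real) \<Rightarrow> 'c \<Rightarrow> real" where
  "vec_mat R y B = (\<lambda>c. inner_on R y (\<lambda>r. B r c))"

lemma inner_on_commute: "inner_on S f g = inner_on S g f"
  unfolding inner_on_def by (simp add: mult.commute)

lemma inner_on_self: "inner_on S f f = sq_norm S f"
  unfolding inner_on_def sq_norm_def by (simp add: power2_eq_square)

lemma sq_norm_nonneg: "0 \<le> sq_norm S f"
  unfolding sq_norm_def by (simp add: sum_nonneg)

lemma sq_norm_eq_0_iff: "finite S \<Longrightarrow> sq_norm S f = 0 \<longleftrightarrow> (\<forall>x\<in>S. f x = 0)"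
  unfolding sq_norm_def by (simp add: sum_nonneg_eq_0_iff)

lemma sq_norm_scale: "sq_norm S (\<lambda>x. a * f x) = a\<^sup>2 * sq_norm S f"
  unfolding sq_norm_def by (simp add: power_mult_distrib sum_distrib_left)

lemma sq_norm_add_scaled:
  "sq_norm S (\<lambda>x. f x + e * g x) = sq_norm S f + 2 * e * inner_on S f g + e\<^sup>2 * sq_norm S g"
  unfolding sq_norm_def inner_on_def
  by (simp add: power2_sum power_mult_distrib sum.distrib sum_distrib_left algebra_simps)

lemma sq_norm_diff:
  "sq_norm S (\<lambda>x. f x - g x) = sq_norm S f - 2 * inner_on S f g + sq_norm S g"
  using sq_norm_add_scaled[of S f "-1" g] by simp

lemma inner_on_point: "finite S \<Longrightarrow> x0 \<in> S \<Longrightarrow> inner_on S (\<lambda>x. if x = x0 then 1 else 0) f = f x0"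
  unfolding inner_on_def
  by (subst sum.cong[OF refl, of _ _ "\<lambda>x. if x = x0 then f x else 0"]) auto

lemma sq_norm_point: "finite S \<Longrightarrow> x0 \<in> S \<Longrightarrow> sq_norm S (\<lambda>x. if x = x0 then 1 else 0) = 1"
  using inner_on_point[of S x0 "\<lambda>x. if x = x0 then 1 else 0"] by (simp add: inner_on_self)

lemma mat_vec_scale: "mat_vec C B (\<lambda>c. a * w c) = (\<lambda>r. a * mat_vec C B w r)"
  unfolding mat_vec_def inner_on_def by (simp add: sum_distrib_left mult_ac)

lemma vec_mat_scale: "vec_mat R (\<lambda>r. a * y r) B c = a * vec_mat R y B c"
  unfolding vec_mat_def inner_on_def by (simp add: sum_distrib_left mult_ac)

lemma sq_norm_mat_vec_scale:
  "sq_norm R (mat_vec C B (\<lambda>c. a * w c)) = a\<^sup>2 * sq_norm R (mat_vec C B w)"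
  using sq_norm_scale[of R a "mat_vec C B w"] by (simp add: mat_vec_scale)

lemma mat_vec_add_scaled:
  "mat_vec C B (\<lambda>c. w c + e * g c) = (\<lambda>r. mat_vec C B w r + e * mat_vec C B g r)"
  unfolding mat_vec_def inner_on_def by (simp add: algebra_simps sum.distrib sum_distrib_left)

lemma inner_mat_vec: "inner_on R y (mat_vec C B w) = inner_on C (vec_mat R y B) w"
proof -
  have "inner_on R y (mat_vec C B w) = (\<Sum>r\<in>R. \<Sum>c\<in>C. y r * B r c * w c)"
    unfolding mat_vec_def inner_on_def by (simp add: sum_distrib_left mult_ac)
  also have "\<dots> = (\<Sum>c\<in>C. \<Sum>r\<in>R. y r * B r c * w c)"
    by (rule sum.swap)
  also have "\<dots> = inner_on C (vec_mat R y B) w"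
    unfolding vec_mat_def inner_on_def by (simp add: sum_distrib_right)
  finally show ?thesis .
qed

lemma continuous_map_sq_norm_mat_vec:
  assumes "finite R" "finite C"
  shows "continuous_map (product_topology (\<lambda>_. euclideanreal) C) euclideanreal
           (\<lambda>w. sq_norm R (mat_vec C B w))"
  unfolding sq_norm_def mat_vec_def inner_on_def power2_eq_square
  by (intro continuous_map_sum continuous_map_real_mult continuous_map_real_mult_left
        continuous_map_product_projection[where X="\<lambda>_. euclideanreal", simplified])
     (use assms in auto)

lemma continuous_map_sq_norm:
  assumes "finite C"
  shows "continuous_map (product_topology (\<lambda>_. euclideanreal) C) euclideanreal (sq_norm C)"
  unfolding sq_norm_def power2_eq_square
  by (intro continuous_map_sum continuous_map_real_mult
        continuous_map_product_projection[where X="\<lambda>_. euclideanreal", simplified])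
     (use assms in auto)

lemma sq_norm_restrict: "sq_norm S (restrict f S) = sq_norm S f"
  unfolding sq_norm_def by (rule sum.cong) auto

lemma mat_vec_restrict: "mat_vec C B (restrict w C) = mat_vec C B w"
  unfolding mat_vec_def inner_on_def by (intro ext sum.cong) auto

lemma sq_norm_mat_vec_attains_max_on_sphere:
  assumes fR: "finite R" and fC: "finite C" and "C \<noteq> {}"
  shows "\<exists>w. sq_norm C w = 1 \<and>
           (\<forall>z. sq_norm C z = 1 \<longrightarrow> sq_norm R (mat_vec C B z) \<le> sq_norm R (mat_vec C B w))"
proof -
  let ?X = "product_topology (\<lambda>_. euclideanreal) C"
  let ?f = "\<lambda>w. sq_norm R (mat_vec C B w)"
  define P where "P = PiE C (\<lambda>_. {-1..(1::real)})"
  define S where "S = {w \<in> P. sq_norm C w \<in> {1}}"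
  have "compactin ?X P"
    unfolding P_def by (simp add: compactin_PiE)
  moreover have "closedin ?X S"
  proof -
    have "Hausdorff_space ?X"
      by (simp add: Hausdorff_space_product_topology)
    then have "closedin ?X P"
      using \<open>compactin ?X P\<close> by (rule compactin_imp_closedin)
    then show ?thesis
      unfolding S_def
      by (rule closedin_continuous_map_preimage_gen[OF continuous_map_sq_norm[OF fC]])
         (simp add: closed_closedin[symmetric])
  qed
  ultimately have "compactin ?X S"
    using closed_compactin[of ?X P S] by (auto simp: S_def)
  then have "compactin euclideanreal (?f ` S)"
    by (rule image_compactin[OF _ continuous_map_sq_norm_mat_vec[OF fR fC]])
  then have "compact (?f ` S)"
    by (simp add: compactin_euclidean_iff)
  have unit_in_S: "restrict z C \<in> S" if z: "sq_norm C z = 1" for z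
  proof -
    have "z c \<in> {-1..1}" if "c \<in> C" for c
    proof -
      have "(z c)\<^sup>2 \<le> sq_norm C z"
        unfolding sq_norm_def using fC that by (intro member_le_sum) auto
      then show ?thesis
        using z by (simp add: abs_square_le_1 abs_le_iff)
    qed
    then show ?thesis
      using z by (simp add: S_def P_def restrict_PiE_iff sq_norm_restrict)
  qed
  obtain c0 where "c0 \<in> C"
    using assms by auto
  then have "?f ` S \<noteq> {}"
    using unit_in_S[OF sq_norm_point[OF fC]] by blast
  from compact_attains_sup[OF \<open>compact (?f ` S)\<close> this]
  obtain w where "w \<in> S" and wmax: "\<forall>z\<in>S. ?f z \<le> ?f w"
    by blast
  have "sq_norm C w = 1"
    using \<open>w \<in> S\<close> by (simp add: S_def)
  moreover have "?f z \<le> ?f w" if "sq_norm C z = 1" for z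
    using wmax unit_in_S[OF that] by (metis mat_vec_restrict)
  ultimately show ?thesis
    by blast
qed

lemma sq_norm_mat_vec_maximiser_exists:
  assumes fR: "finite R" and fC: "finite C" and "C \<noteq> {}"
  shows "\<exists>w. sq_norm C w = 1 \<and>
           (\<forall>z. sq_norm R (mat_vec C B z) \<le> sq_norm R (mat_vec C B w) * sq_norm C z)"
proof -
  let ?f = "\<lambda>w. sq_norm R (mat_vec C B w)"
  obtain w where w: "sq_norm C w = 1" and wmax: "\<And>z. sq_norm C z = 1 \<Longrightarrow> ?f z \<le> ?f w"
    using sq_norm_mat_vec_attains_max_on_sphere[OF assms] by blast
  have "?f z \<le> ?f w * sq_norm C z" for z
  proof (cases "sq_norm C z = 0")
    case True
    then have "mat_vec C B z = (\<lambda>r. 0)"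
      using fC by (simp add: sq_norm_eq_0_iff mat_vec_def inner_on_def)
    then show ?thesis
      using True by (simp add: sq_norm_def)
  next
    case False
    define s where "s = sqrt (sq_norm C z)"
    have s2: "s\<^sup>2 = sq_norm C z" and "s \<noteq> 0"
      using False sq_norm_nonneg[of C z] by (auto simp: s_def)
    have "sq_norm C (\<lambda>c. (1 / s) * z c) = 1"
      using s2 False sq_norm_scale[of C "1 / s" z] by (simp add: power_divide)
    then have "?f (\<lambda>c. (1 / s) * z c) \<le> ?f w"
      by (rule wmax)
    then have "?f z / s\<^sup>2 \<le> ?f w"
      by (simp only: sq_norm_mat_vec_scale) (simp add: power_divide)
    then show ?thesis
      using s2 False sq_norm_nonneg[of C z] by (simp add: divide_le_eq)
  qed
  then show ?thesis
    using w by blast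
qed

section \<open>Singular value decomposition\<close>

lemma quadratic_nonpos_imp_linear_coeff_0:
  fixes a b :: real
  assumes nonpos: "\<And>e. 2 * e * a + e\<^sup>2 * b \<le> 0" and "0 \<le> a"
  shows "a = 0"
proof (rule ccontr)
  assume "a \<noteq> 0"
  with \<open>0 \<le> a\<close> have "0 < a" by simp
  define e where "e = a / (\<bar>b\<bar> + 1)"
  have "0 < e" and "e * \<bar>b\<bar> < a"
    using \<open>0 < a\<close> by (auto simp: e_def field_simps)
  moreover have "e * - \<bar>b\<bar> \<le> e * b"
    using \<open>0 < e\<close> by (intro mult_left_mono) auto
  ultimately have "0 < e * (2 * a + e * b)"
    using \<open>0 < a\<close> by (intro mult_pos_pos) linarith+
  then show False
    using nonpos[of e] by (simp add: power2_eq_square algebra_simps)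
qed

lemma sq_norm_mat_vec_maximiser_stationary:
  assumes fC: "finite C" and w: "sq_norm C w = 1"
    and max: "\<And>z. sq_norm R (mat_vec C B z) \<le> sq_norm R (mat_vec C B w) * sq_norm C z"
  shows "\<forall>c\<in>C. vec_mat R (mat_vec C B w) B c = sq_norm R (mat_vec C B w) * w c"
proof -
  define M where "M = sq_norm R (mat_vec C B w)"
  define g where "g c = vec_mat R (mat_vec C B w) B c - M * w c" for c
  have key: "inner_on R (mat_vec C B w) (mat_vec C B g) - M * inner_on C w g = sq_norm C g"
    unfolding inner_mat_vec inner_on_self[symmetric]
    by (simp add: inner_on_def g_def sum_distrib_left sum_subtractf sum.distrib algebra_simps)
  have "2 * e * sq_norm C g + e\<^sup>2 * (sq_norm R (mat_vec C B g) - M * sq_norm C g) \<le> 0" for e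
  proof -
    have "M + 2 * e * inner_on R (mat_vec C B w) (mat_vec C B g) + e\<^sup>2 * sq_norm R (mat_vec C B g)
        \<le> M * (1 + 2 * e * inner_on C w g + e\<^sup>2 * sq_norm C g)"
      using max[of "\<lambda>c. w c + e * g c"] w
      by (simp add: mat_vec_add_scaled sq_norm_add_scaled M_def)
    then show ?thesis
      unfolding key[symmetric] by (simp add: algebra_simps)
  qed
  then have "sq_norm C g = 0"
    by (rule quadratic_nonpos_imp_linear_coeff_0) (rule sq_norm_nonneg)
  then show ?thesis
    using fC by (simp add: sq_norm_eq_0_iff g_def M_def)
qed

lemma singular_pair_exists:
  assumes fR: "finite R" and fC: "finite C" and "r0 \<in> R" "c0 \<in> C" "B r0 c0 \<noteq> 0"
  shows "\<exists>s x w. 0 < s \<and> sq_norm R x = 1 \<and> sq_norm C w = 1 \<and>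
           mat_vec C B w = (\<lambda>r. s * x r) \<and> (\<forall>c\<in>C. vec_mat R x B c = s * w c)"
proof -
  obtain w where w: "sq_norm C w = 1"
    and max: "\<And>z. sq_norm R (mat_vec C B z) \<le> sq_norm R (mat_vec C B w) * sq_norm C z"
    using sq_norm_mat_vec_maximiser_exists[OF fR fC, of B] \<open>c0 \<in> C\<close> by blast
  define M where "M = sq_norm R (mat_vec C B w)"
  have "0 < M"
  proof -
    let ?\<delta> = "\<lambda>c. if c = c0 then 1 else 0"
    have "0 < (B r0 c0)\<^sup>2"
      using \<open>B r0 c0 \<noteq> 0\<close> by simp
    also have "\<dots> \<le> sq_norm R (\<lambda>r. B r c0)"
      unfolding sq_norm_def using fR \<open>r0 \<in> R\<close> by (intro member_le_sum) auto
    also have "\<dots> = sq_norm R (mat_vec C B ?\<delta>)"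
      using fC \<open>c0 \<in> C\<close> by (simp add: mat_vec_def inner_on_commute[of C "B _"] inner_on_point)
    also have "\<dots> \<le> M"
      using max[of ?\<delta>] fC \<open>c0 \<in> C\<close> by (simp add: sq_norm_point M_def)
    finally show ?thesis .
  qed
  define s where "s = sqrt M"
  define x where "x r = (1 / s) * mat_vec C B w r" for r
  have "0 < s" and "s * s = M"
    using \<open>0 < M\<close> by (auto simp: s_def)
  have "mat_vec C B w = (\<lambda>r. s * x r)"
    using \<open>0 < s\<close> by (simp add: x_def)
  moreover have "sq_norm R x = 1"
    using sq_norm_scale[of R "1 / s" "mat_vec C B w"] \<open>s * s = M\<close> \<open>0 < M\<close>
    by (simp add: x_def[abs_def] M_def power2_eq_square)
  moreover have "vec_mat R x B c = s * w c" if "c \<in> C" for c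
    using sq_norm_mat_vec_maximiser_stationary[OF fC w max] that \<open>s * s = M\<close> \<open>0 < s\<close>
    unfolding x_def[abs_def] vec_mat_scale by (simp add: M_def field_simps)
  ultimately show ?thesis
    using \<open>0 < s\<close> w by blast
qed

definition orthonormal_on :: "'a set \<Rightarrow> (nat \<Rightarrow> 'a \<Rightarrow> real) \<Rightarrow> nat \<Rightarrow> bool" where
  "orthonormal_on S f t \<longleftrightarrow>
     (\<forall>j<t. \<forall>j'<t. inner_on S (f j) (f j') = (if j = j' then 1 else 0))"

lemma inner_on_sum_right:
  "inner_on S f (\<lambda>x. \<Sum>j<t. a j * g j x) = (\<Sum>j<t. a j * inner_on S f (g j))"
  unfolding inner_on_def by (simp add: sum_distrib_left sum.swap[of _ S] mult_ac)

lemma bessel_inequality: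
  assumes "orthonormal_on S v t"
  shows "(\<Sum>j<t. (inner_on S z (v j))\<^sup>2) \<le> sq_norm S z"
proof -
  define a where "a j = inner_on S z (v j)" for j
  define p where "p x = (\<Sum>j<t. a j * v j x)" for x
  have "inner_on S (v j) p = a j" if "j < t" for j
  proof -
    have "inner_on S (v j) p = (\<Sum>j'<t. if j' = j then a j' else 0)"
      unfolding p_def[abs_def] inner_on_sum_right
      using assms that by (intro sum.cong) (auto simp: orthonormal_on_def)
    then show ?thesis
      using that by simp
  qed
  then have "inner_on S p p = (\<Sum>j<t. (a j)\<^sup>2)"
    using inner_on_sum_right[where f=p and a=a and g=v and t=t, folded p_def[abs_def]]
    by (simp add: inner_on_commute[of S p] power2_eq_square)
  moreover have "inner_on S z p = (\<Sum>j<t. (a j)\<^sup>2)"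
    by (simp add: p_def[abs_def] inner_on_sum_right a_def power2_eq_square)
  moreover have "0 \<le> sq_norm S (\<lambda>x. z x - p x)"
    by (rule sq_norm_nonneg)
  ultimately show ?thesis
    by (simp add: sq_norm_diff inner_on_self a_def)
qed

lemma orthonormal_on_card_le:
  assumes "finite S" and "orthonormal_on S v t"
  shows "t \<le> card S"
proof -
  have "(\<Sum>j<t. (v j x)\<^sup>2) \<le> 1" if "x \<in> S" for x
    using bessel_inequality[OF assms(2), of "\<lambda>y. if y = x then 1 else 0"] assms(1) that
    by (simp add: inner_on_point sq_norm_point)
  then have "(\<Sum>x\<in>S. \<Sum>j<t. (v j x)\<^sup>2) \<le> real (card S)"
    using sum_mono[of S "\<lambda>x. \<Sum>j<t. (v j x)\<^sup>2" "\<lambda>_. 1"] by simp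
  moreover have "(\<Sum>x\<in>S. (v j x)\<^sup>2) = 1" if "j < t" for j
    using assms(2) that inner_on_self[of S "v j"] by (simp add: orthonormal_on_def sq_norm_def)
  then have "(\<Sum>x\<in>S. \<Sum>j<t. (v j x)\<^sup>2) = real t"
    using sum.swap[where g="\<lambda>x j. (v j x)\<^sup>2" and A=S and B="{..<t}"] by simp
  ultimately show ?thesis
    by simp
qed

lemma orthonormal_on_extend:
  assumes "orthonormal_on S f t" and "\<forall>j<t. inner_on S (f j) g = 0" and "sq_norm S g = 1"
  shows "orthonormal_on S (f(t := g)) (Suc t)"
  using assms by (auto simp: orthonormal_on_def less_Suc_eq inner_on_self inner_on_commute[of S g])

definition svd_residual :: "('r \<Rightarrow> 'c \<Rightarrow> real) \<Rightarrow> (nat \<Rightarrow> real) \<Rightarrow> (nat \<Rightarrow> 'r \<Rightarrow> real)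
    \<Rightarrow> (nat \<Rightarrow> 'c \<Rightarrow> real) \<Rightarrow> nat \<Rightarrow> 'r \<Rightarrow> 'c \<Rightarrow> real" where
  "svd_residual A \<sigma> u v t r c = A r c - (\<Sum>j<t. \<sigma> j * u j r * v j c)"

definition partial_svd :: "'r set \<Rightarrow> 'c set \<Rightarrow> ('r \<Rightarrow> 'c \<Rightarrow> real) \<Rightarrow> nat \<Rightarrow> (nat \<Rightarrow> real)
    \<Rightarrow> (nat \<Rightarrow> 'r \<Rightarrow> real) \<Rightarrow> (nat \<Rightarrow> 'c \<Rightarrow> real) \<Rightarrow> bool" where
  "partial_svd R C A t \<sigma> u v \<longleftrightarrow>
     (\<forall>j<t. 0 \<le> \<sigma> j) \<and> orthonormal_on R u t \<and> orthonormal_on C v t \<and>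
     (\<forall>j<t. \<forall>r\<in>R. mat_vec C (svd_residual A \<sigma> u v t) (v j) r = 0) \<and>
     (\<forall>j<t. \<forall>c\<in>C. vec_mat R (u j) (svd_residual A \<sigma> u v t) c = 0)"

lemma svd_residual_Suc:
  "svd_residual A (\<sigma>(t := s)) (u(t := x)) (v(t := w)) (Suc t)
     = (\<lambda>r c. svd_residual A \<sigma> u v t r c - s * x r * w c)"
proof (intro ext)
  fix r c
  have "(\<Sum>j<t. (\<sigma>(t := s)) j * (u(t := x)) j r * (v(t := w)) j c) = (\<Sum>j<t. \<sigma> j * u j r * v j c)"
    by (intro sum.cong) auto
  then show "svd_residual A (\<sigma>(t := s)) (u(t := x)) (v(t := w)) (Suc t) r c
      = svd_residual A \<sigma> u v t r c - s * x r * w c"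
    unfolding svd_residual_def by simp
qed

lemma mat_vec_rank_one_diff:
  "mat_vec C (\<lambda>r c. B r c - s * x r * w c) y r = mat_vec C B y r - s * x r * inner_on C w y"
  unfolding mat_vec_def inner_on_def by (simp add: algebra_simps sum_subtractf sum_distrib_left)

lemma vec_mat_rank_one_diff:
  "vec_mat R y (\<lambda>r c. B r c - s * x r * w c) c = vec_mat R y B c - s * w c * inner_on R y x"
  unfolding vec_mat_def inner_on_def by (simp add: algebra_simps sum_subtractf sum_distrib_left)

lemma partial_svd_extend:
  assumes fR: "finite R" and fC: "finite C" and svd: "partial_svd R C A t \<sigma> u v"
    and "r0 \<in> R" "c0 \<in> C" "svd_residual A \<sigma> u v t r0 c0 \<noteq> 0"
  shows "\<exists>\<sigma>' u' v'. partial_svd R C A (Suc t) \<sigma>' u' v'"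
proof -
  define B where "B = svd_residual A \<sigma> u v t"
  have Bv: "\<forall>j<t. \<forall>r\<in>R. mat_vec C B (v j) r = 0"
    and uB: "\<forall>j<t. \<forall>c\<in>C. vec_mat R (u j) B c = 0"
    using svd by (auto simp: partial_svd_def B_def)
  obtain s x w where "0 < s" and x: "sq_norm R x = 1" and w: "sq_norm C w = 1"
    and Bw: "mat_vec C B w = (\<lambda>r. s * x r)" and xB: "\<forall>c\<in>C. vec_mat R x B c = s * w c"
    using singular_pair_exists[OF fR fC assms(4-5)] assms(6) unfolding B_def by blast
  have w_orth: "inner_on C w (v j) = 0" if "j < t" for j
  proof -
    have "s * inner_on C w (v j) = inner_on C (vec_mat R x B) (v j)"
      using xB by (simp add: inner_on_def sum_distrib_left mult_ac)
    also have "\<dots> = inner_on R x (mat_vec C B (v j))"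
      by (simp add: inner_mat_vec inner_on_commute[of C])
    also have "\<dots> = 0"
      using Bv that by (simp add: inner_on_def)
    finally show ?thesis
      using \<open>0 < s\<close> by simp
  qed
  have x_orth: "inner_on R (u j) x = 0" if "j < t" for j
  proof -
    have "s * inner_on R (u j) x = inner_on R (u j) (mat_vec C B w)"
      using Bw by (simp add: inner_on_def sum_distrib_left mult_ac)
    also have "\<dots> = inner_on C (vec_mat R (u j) B) w"
      by (rule inner_mat_vec)
    also have "\<dots> = 0"
      using uB that by (simp add: inner_on_def)
    finally show ?thesis
      using \<open>0 < s\<close> by simp
  qed
  have "orthonormal_on R (u(t := x)) (Suc t)"
    using svd x_orth x by (intro orthonormal_on_extend) (auto simp: partial_svd_def)
  moreover have "orthonormal_on C (v(t := w)) (Suc t)"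
    using svd w_orth w
    by (intro orthonormal_on_extend) (auto simp: partial_svd_def inner_on_commute[of C w])
  moreover have "mat_vec C (\<lambda>r c. B r c - s * x r * w c) ((v(t := w)) j) r = 0"
    if "j < Suc t" "r \<in> R" for j r
    using that Bv w_orth Bw w
    by (cases "j = t") (auto simp: mat_vec_rank_one_diff inner_on_self)
  moreover have "vec_mat R ((u(t := x)) j) (\<lambda>r c. B r c - s * x r * w c) c = 0"
    if "j < Suc t" "c \<in> C" for j c
    using that uB x_orth xB x
    by (cases "j = t") (auto simp: vec_mat_rank_one_diff inner_on_self)
  ultimately have "partial_svd R C A (Suc t) (\<sigma>(t := s)) (u(t := x)) (v(t := w))"
    using svd \<open>0 < s\<close>
    unfolding partial_svd_def svd_residual_Suc B_def[symmetric] by (simp add: less_Suc_eq)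
  then show ?thesis
    by blast
qed

lemma partial_svd_complete:
  assumes "finite R" "finite C"
  shows "partial_svd R C A t \<sigma> u v \<Longrightarrow> \<exists>p \<sigma> u v. svd_decomp R C A p \<sigma> u v"
proof (induction "card C - t" arbitrary: t \<sigma> u v rule: less_induct)
  case less
  show ?case
  proof (cases "\<forall>r\<in>R. \<forall>c\<in>C. svd_residual A \<sigma> u v t r c = 0")
    case True
    then have "svd_decomp R C A t \<sigma> u v"
      using less.prems
      by (simp add: svd_decomp_def partial_svd_def orthonormal_on_def inner_on_def svd_residual_def)
    then show ?thesis
      by blast
  next
    case False
    then obtain \<sigma>' u' v' where next_svd: "partial_svd R C A (Suc t) \<sigma>' u' v'"
      using partial_svd_extend[OF assms less.prems] by blast
    then have "Suc t \<le> card C"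
      using orthonormal_on_card_le[OF assms(2)] by (auto simp: partial_svd_def)
    then show ?thesis
      using less.hyps[OF _ next_svd] by simp
  qed
qed

lemma svd_decomp_exists:
  assumes "finite R" "finite C"
  shows "\<exists>p \<sigma> u v. svd_decomp R C A p \<sigma> u v"
  using partial_svd_complete[OF assms, of A 0]
  by (simp add: partial_svd_def orthonormal_on_def)

lemma trace_norm_svd:
  assumes "finite R" "finite C"
  obtains p \<sigma> u v where "svd_decomp R C A p \<sigma> u v" and "trace_norm R C A = (\<Sum>j<p. \<sigma> j)"
proof -
  have "\<exists>s p \<sigma> u v. svd_decomp R C A p \<sigma> u v \<and> s = (\<Sum>j<p. \<sigma> j)"
    using svd_decomp_exists[OF assms] by blast
  from someI_ex[OF this] show ?thesis
    using that unfolding trace_norm_def by blast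
qed

section \<open>Duality of trace norm and spectral norm\<close>

lemma abs_inner_on_le: "\<bar>inner_on S f g\<bar> \<le> sqrt (sq_norm S f) * sqrt (sq_norm S g)"
proof -
  have "(inner_on S f g)\<^sup>2 \<le> sq_norm S f * sq_norm S g"
    unfolding inner_on_def sq_norm_def by (rule Cauchy_Schwarz_ineq_sum)
  then show ?thesis
    by (metis real_sqrt_abs real_sqrt_le_mono real_sqrt_mult)
qed

lemma sqrt_sq_norm_mat_vec_le_spec_norm:
  assumes "sq_norm C v \<le> 1"
  shows "sqrt (sq_norm R (mat_vec C B v)) \<le> spec_norm R C B"
proof -
  define V where "V = {sqrt (\<Sum>r\<in>R. (\<Sum>c\<in>C. B r c * v c)\<^sup>2) | v. (\<Sum>c\<in>C. (v c)\<^sup>2) \<le> 1}"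
  have "x \<le> sqrt (\<Sum>r\<in>R. sq_norm C (B r))" if "x \<in> V" for x
  proof -
    obtain v where x: "x = sqrt (sq_norm R (mat_vec C B v))" and v: "sq_norm C v \<le> 1"
      using \<open>x \<in> V\<close> by (auto simp: V_def sq_norm_def mat_vec_def inner_on_def)
    have "(mat_vec C B v r)\<^sup>2 \<le> sq_norm C (B r)" for r
    proof -
      have "(mat_vec C B v r)\<^sup>2 \<le> sq_norm C (B r) * sq_norm C v"
        unfolding mat_vec_def inner_on_def sq_norm_def by (rule Cauchy_Schwarz_ineq_sum)
      also have "\<dots> \<le> sq_norm C (B r)"
        using v sq_norm_nonneg[of C "B r"] by (simp add: mult_left_le)
      finally show ?thesis .
    qed
    then show ?thesis
      unfolding x sq_norm_def[of R] by (intro real_sqrt_le_mono sum_mono)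
  qed
  then have "bdd_above V"
    by (rule bdd_aboveI)
  moreover have "sqrt (sq_norm R (mat_vec C B v)) \<in> V"
    using assms by (auto simp: V_def sq_norm_def mat_vec_def inner_on_def)
  ultimately show ?thesis
    unfolding spec_norm_def V_def[symmetric] by (simp add: cSup_upper)
qed

lemma svd_decomp_frob_inner:
  assumes "svd_decomp R C A p \<sigma> u v"
  shows "(\<Sum>r\<in>R. \<Sum>c\<in>C. A r c * B r c) = (\<Sum>j<p. \<sigma> j * inner_on R (u j) (mat_vec C B (v j)))"
proof -
  have "(\<Sum>r\<in>R. \<Sum>c\<in>C. A r c * B r c) = (\<Sum>r\<in>R. \<Sum>c\<in>C. \<Sum>j<p. \<sigma> j * u j r * v j c * B r c)"
    using assms unfolding svd_decomp_def by (intro sum.cong refl) (simp add: sum_distrib_right)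
  also have "\<dots> = (\<Sum>j<p. \<Sum>r\<in>R. \<Sum>c\<in>C. \<sigma> j * u j r * v j c * B r c)"
    by (simp only: sum.swap[of _ "{..<p}"])
  also have "\<dots> = (\<Sum>j<p. \<sigma> j * inner_on R (u j) (mat_vec C B (v j)))"
    unfolding mat_vec_def inner_on_def by (simp add: sum_distrib_left mult_ac)
  finally show ?thesis .
qed

lemma trace_norm_nonneg:
  assumes "finite R" "finite C"
  shows "0 \<le> trace_norm R C A"
proof -
  obtain p \<sigma> u v where "svd_decomp R C A p \<sigma> u v" and "trace_norm R C A = (\<Sum>j<p. \<sigma> j)"
    using trace_norm_svd[OF assms] by blast
  then show ?thesis
    by (auto simp: svd_decomp_def intro: sum_nonneg)
qed

lemma abs_frob_inner_le_trace_norm_spec_norm: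
  assumes "finite R" "finite C"
  shows "\<bar>\<Sum>r\<in>R. \<Sum>c\<in>C. A r c * B r c\<bar> \<le> trace_norm R C A * spec_norm R C B"
proof -
  obtain p \<sigma> u v where svd: "svd_decomp R C A p \<sigma> u v" and tr: "trace_norm R C A = (\<Sum>j<p. \<sigma> j)"
    using trace_norm_svd[OF assms] by blast
  have "\<bar>inner_on R (u j) (mat_vec C B (v j))\<bar> \<le> spec_norm R C B" if "j < p" for j
  proof -
    have "sq_norm R (u j) = 1" and "sq_norm C (v j) = 1"
      using svd that by (auto simp: svd_decomp_def inner_on_self[symmetric] inner_on_def)
    then show ?thesis
      using abs_inner_on_le[of R "u j" "mat_vec C B (v j)"]
        sqrt_sq_norm_mat_vec_le_spec_norm[of C "v j" R B] by simp
  qed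
  moreover have "0 \<le> \<sigma> j" if "j < p" for j
    using svd that by (simp add: svd_decomp_def)
  ultimately have "(\<Sum>j<p. \<bar>\<sigma> j * inner_on R (u j) (mat_vec C B (v j))\<bar>) \<le> (\<Sum>j<p. \<sigma> j * spec_norm R C B)"
    by (intro sum_mono) (simp add: abs_mult mult_left_mono)
  then show ?thesis
    unfolding svd_decomp_frob_inner[OF svd] tr sum_distrib_right
    by (rule order_trans[OF sum_abs])
qed

section \<open>Mode unfoldings of tensors\<close>

lemma sum_idx_set_mode_split:
  assumes "k < K"
  shows "(\<Sum>x\<in>idx_set K n. f x) = (\<Sum>i<n k. \<Sum>c\<in>unfold_cols K n k. f (c(k := i)))"
proof -
  have "idx_set K n = Pi\<^sub>E (insert k ({..<K} - {k})) (\<lambda>j. {..<n j})"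
    using assms unfolding idx_set_def by (simp add: insert_absorb)
  also have "\<dots> = (\<lambda>(i, c). c(k := i)) ` ({..<n k} \<times> unfold_cols K n k)"
    unfolding unfold_cols_def by (rule PiE_insert_eq)
  moreover have "inj_on (\<lambda>(i, c). c(k := i)) ({..<n k} \<times> unfold_cols K n k)"
    unfolding unfold_cols_def by (rule inj_combinator) simp
  ultimately have "(\<Sum>x\<in>idx_set K n. f x)
      = (\<Sum>(i, c)\<in>{..<n k} \<times> unfold_cols K n k. f (c(k := i)))"
    by (simp add: sum.reindex comp_def case_prod_unfold)
  then show ?thesis
    by (simp add: sum.cartesian_product)
qed

lemma frob_inner_mode_unfold:
  assumes "k < K"
  shows "(\<Sum>x\<in>idx_set K n. S x * T x)
    = (\<Sum>i\<in>{..<n k}. \<Sum>c\<in>unfold_cols K n k. unfold k S i c * unfold k T i c)"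
  using sum_idx_set_mode_split[OF assms] by (simp add: unfold_def)

lemma finite_unfold_cols: "finite (unfold_cols K n k)"
  unfolding unfold_cols_def by (simp add: finite_PiE)

lemma frob_inner_ge_neg_trace_mode:
  assumes "k < K" and "spec_mode K n k P \<le> \<alpha>" and "spec_mode K n k Q \<le> \<alpha>"
  shows "- (2 * \<alpha>) * trace_mode K n k D \<le> (\<Sum>x\<in>idx_set K n. D x * (P x - Q x))"
proof -
  let ?R = "{..<n k}" and ?C = "unfold_cols K n k"
  have bound: "\<bar>\<Sum>x\<in>idx_set K n. D x * W x\<bar> \<le> trace_mode K n k D * \<alpha>"
    if "spec_mode K n k W \<le> \<alpha>" for W
  proof -
    have "\<bar>\<Sum>x\<in>idx_set K n. D x * W x\<bar> \<le> trace_mode K n k D * spec_mode K n k W"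
      unfolding frob_inner_mode_unfold[OF assms(1)] trace_mode_def spec_mode_def
      by (rule abs_frob_inner_le_trace_norm_spec_norm) (simp_all add: finite_unfold_cols)
    also have "\<dots> \<le> trace_mode K n k D * \<alpha>"
      using that trace_norm_nonneg[of ?R ?C] finite_unfold_cols
      by (intro mult_left_mono) (simp_all add: trace_mode_def)
    finally show ?thesis .
  qed
  have "(\<Sum>x\<in>idx_set K n. D x * (P x - Q x))
      = (\<Sum>x\<in>idx_set K n. D x * P x) - (\<Sum>x\<in>idx_set K n. D x * Q x)"
    by (simp add: right_diff_distrib sum_subtractf)
  then show ?thesis
    using bound[OF assms(2)] bound[OF assms(3)] by (simp add: abs_le_iff algebra_simps)
qed

lemma square_sum_eq_sum_squares_plus_cross:
  fixes a :: "nat \<Rightarrow> real"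
  shows "(\<Sum>k<K. a k)\<^sup>2 = (\<Sum>k<K. (a k)\<^sup>2) + (\<Sum>k<K. \<Sum>l\<in>{..<K} - {k}. a k * a l)"
proof -
  have "(\<Sum>l<K. a k * a l) = (a k)\<^sup>2 + (\<Sum>l\<in>{..<K} - {k}. a k * a l)" if "k < K" for k
    using that by (simp add: sum.remove[of "{..<K}" k] power2_eq_square)
  then show ?thesis
    by (simp add: power2_eq_square sum_product sum.distrib)
qed

lemma sum_frob_sq_le:
  assumes cross: "\<And>k l. k < K \<Longrightarrow> l < K \<Longrightarrow> l \<noteq> k \<Longrightarrow> - c k \<le> (\<Sum>x\<in>idx_set K n. D k x * D l x)"
  shows "(\<Sum>k<K. (frob K n (D k))\<^sup>2)
    \<le> (frob K n (\<lambda>x. \<Sum>k<K. D k x))\<^sup>2 + (real K - 1) * (\<Sum>k<K. c k)"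
proof -
  let ?I = "idx_set K n"
  have frob_sq: "(frob K n T)\<^sup>2 = (\<Sum>x\<in>?I. (T x)\<^sup>2)" for T
    unfolding frob_def by (simp add: sum_nonneg)
  have "(\<Sum>k<K. - ((real K - 1) * c k)) \<le> (\<Sum>k<K. \<Sum>l\<in>{..<K} - {k}. \<Sum>x\<in>?I. D k x * D l x)"
  proof (intro sum_mono)
    fix k assume "k \<in> {..<K}"
    then have "real (card ({..<K} - {k})) = real K - 1"
      by (simp add: of_nat_diff)
    then have "- ((real K - 1) * c k) = (\<Sum>l\<in>{..<K} - {k}. - c k)"
      by simp
    also have "\<dots> \<le> (\<Sum>l\<in>{..<K} - {k}. \<Sum>x\<in>?I. D k x * D l x)"
      using cross \<open>k \<in> {..<K}\<close> by (intro sum_mono) auto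
    finally show "- ((real K - 1) * c k) \<le> \<dots>" .
  qed
  also have "\<dots> = (\<Sum>x\<in>?I. \<Sum>k<K. \<Sum>l\<in>{..<K} - {k}. D k x * D l x)"
    by (simp add: sum.swap[of _ ?I])
  finally show ?thesis
    unfolding frob_sq square_sum_eq_sum_squares_plus_cross sum.distrib sum.swap[of _ ?I]
    by (simp add: sum_distrib_left sum_negf)
qed

theorem lemma4:
  fixes K :: nat and n :: "nat \<Rightarrow> nat" and \<alpha> lam :: real
    and Y Wst :: tensor and Wstar What :: "nat \<Rightarrow> tensor"
  assumes "\<forall>k<K. n k > 0"
    and "\<alpha> \<ge> 0" and "lam > 0"
    and "Wst = (\<lambda>x. \<Sum>k<K. Wstar k x)"
    and "\<forall>k<K. \<forall>l<K. k \<noteq> l \<longrightarrow> spec_mode K n k (Wstar l) \<le> \<alpha>"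
    and "feasible K n \<alpha> What"
    and "\<forall>W. feasible K n \<alpha> W \<longrightarrow> objective K n Y lam What \<le> objective K n Y lam W"
  shows "let \<Delta>k = (\<lambda>k x. What k x - Wstar k x); \<Delta> = (\<lambda>x. \<Sum>k<K. \<Delta>k k x) in
     1/2 * (\<Sum>k<K. (frob K n (\<Delta>k k))\<^sup>2)
       \<le> 1/2 * (frob K n \<Delta>)\<^sup>2 + \<alpha> * (real K - 1) * (\<Sum>k<K. trace_mode K n k (\<Delta>k k))"
proof -
  define D where "D k x = What k x - Wstar k x" for k x
  define tr where "tr k = trace_mode K n k (D k)" for k
  have "- (2 * \<alpha> * tr k) \<le> (\<Sum>x\<in>idx_set K n. D k x * D l x)"
    if "k < K" "l < K" "l \<noteq> k" for k l
    using frob_inner_ge_neg_trace_mode[where P = "What l" and Q = "Wstar l" and D = "D k"]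
      assms(5,6) that by (simp add: feasible_def tr_def D_def[abs_def])
  then have "(\<Sum>k<K. (frob K n (D k))\<^sup>2)
      \<le> (frob K n (\<lambda>x. \<Sum>k<K. D k x))\<^sup>2 + (real K - 1) * (\<Sum>k<K. 2 * \<alpha> * tr k)"
    by (rule sum_frob_sq_le)
  then show ?thesis
    by (simp add: Let_def D_def[abs_def] tr_def sum_distrib_left[symmetric] algebra_simps)
qed

end
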